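(* Let $n,m,\mu$ be positive integers and let $\Xi=\{\hat\xi\in\mathbb{R}^{n+m}: P\hat\xi\ge p\}$ be a bounded polytope (with given $P\in\mathbb{R}^{l\times(n+m)}$, $p\in\mathbb{R}^l$) such that for every $\hat\xi=(\hat a_1,\dots,\hat a_n,\hat b_1,\dots,\hat b_m)^T\in\Xi$ one has $\hat b_1\neq0$ and all roots of $\hat b(\lambda)=\hat b_1+\hat b_2\lambda+\dots+\hat b_m\lambda^{m-1}$ lie outside the closed unit disk. Let $y=(y_t)$ and $u=(u_t)$ be real sequences with $y_k=0$ for $k\le -n$ and $u_k=0$ for $k<0$ (the initial values $y_{1-n},\dots,y_0$ being arbitrary). Let $\hat\theta=(\hat\xi^T,\hat\delta^w,\hat\delta^y,\hat\delta^u)^T$ with $\hat\xi\in\Xi$, $\hat\delta^w\ge0$, $\hat\delta^y\ge0$, $\hat\delta^u\ge0$, and suppose that for all $t\ge0$ $$\big|\hat a(q^{-1})y_{t+1}-\hat b(q^{-1})u_t\big|\le \hat\delta^w+\hat\delta^y\,|y_{t+1-\mu}^{t}|+\hat\delta^u\,|u_{t+1-\mu}^{t}|.$$ Then the data $(y,u)$ are consistent with the plant model with parameter vector $\hat\theta$: namely, $\hat\xi\in\Xi$ and there exist a real sequence $w$ with $|w_t|\le1$ for all $t$ and strictly causal (linear time-varying) operators $\Delta^1,\Delta^2$ on real sequences with memory $\mu$, satisfying $|\Delta^1(y)_t|\le|y_{t-\mu}^{t-1}|$ and $|\Delta^2(u)_t|\le|u_{t-\mu}^{t-1}|$ for all $t$,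 such that for all $t\ge0$ $$\hat a(q^{-1})y_{t+1}=\hat b(q^{-1})u_t+\hat\delta^w w_{t+1}+\hat\delta^y\Delta^1(y)_{t+1}+\hat\delta^u\Delta^2(u)_{t+1}.$$
   Context: $q^{-1}$ is the backward shift operator, $q^{-1}y_t=y_{t-1}$. For $\hat\xi=(\hat a_1,\dots,\hat a_n,\hat b_1,\dots,\hat b_m)^T$, $\hat a(q^{-1})=1+\hat a_1q^{-1}+\dots+\hat a_nq^{-n}$ and $\hat b(q^{-1})=\hat b_1+\hat b_2q^{-1}+\dots+\hat b_mq^{1-m}$. For a sequence $x$, $x_s^t=(x_s,\dots,x_t)$ and $|x_s^t|=\max_{s\le k\le t}|x_k|$. An operator $\Delta$ on real sequences is strictly causal with memory $\mu$ if $(\Delta x)_t$ depends only on $x_{t-\mu},\dots,x_{t-1}$. *)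

theory Defs
  imports Complex_Main
begin

text \<open>Vectors in R^(n+m) are represented as functions nat => real, supported on {0..<n+m};
  component i (0-based) of xi is xi i. The matrix P (l x (n+m)) is P :: nat => nat => real,
  p :: nat => real.\<close>

definition polytope :: "nat \<Rightarrow> nat \<Rightarrow> (nat \<Rightarrow> nat \<Rightarrow> real) \<Rightarrow> (nat \<Rightarrow> real) \<Rightarrow> (nat \<Rightarrow> real) set" where
  "polytope N l P p = {\<xi>. (\<forall>i\<ge>N. \<xi> i = 0) \<and> (\<forall>j<l. (\<Sum>i<N. P j i * \<xi> i) \<ge> p j)}"

definition bounded_vecset :: "(nat \<Rightarrow> real) set \<Rightarrow> bool" where
  "bounded_vecset S \<longleftrightarrow> (\<exists>B. \<forall>\<xi>\<in>S. \<forall>i. \<bar>\<xi> i\<bar> \<le> B)"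

definition coef_a :: "(nat \<Rightarrow> real) \<Rightarrow> nat \<Rightarrow> real" where
  "coef_a \<xi> i = \<xi> (i - 1)"

definition coef_b :: "nat \<Rightarrow> (nat \<Rightarrow> real) \<Rightarrow> nat \<Rightarrow> real" where
  "coef_b n \<xi> j = \<xi> (n + j - 1)"

definition apply_a :: "nat \<Rightarrow> (nat \<Rightarrow> real) \<Rightarrow> (int \<Rightarrow> real) \<Rightarrow> int \<Rightarrow> real" where
  "apply_a n \<xi> y s = y s + (\<Sum>i=1..n. coef_a \<xi> i * y (s - int i))"

definition apply_b :: "nat \<Rightarrow> nat \<Rightarrow> (nat \<Rightarrow> real) \<Rightarrow> (int \<Rightarrow> real) \<Rightarrow> int \<Rightarrow> real" where
  "apply_b n m \<xi> u s = (\<Sum>j=1..m. coef_b n \<xi> j * u (s + 1 - int j))"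

definition b_poly :: "nat \<Rightarrow> nat \<Rightarrow> (nat \<Rightarrow> real) \<Rightarrow> complex \<Rightarrow> complex" where
  "b_poly n m \<xi> z = (\<Sum>j=1..m. complex_of_real (coef_b n \<xi> j) * z ^ (j - 1))"

definition seg_max :: "(int \<Rightarrow> real) \<Rightarrow> int \<Rightarrow> int \<Rightarrow> real" where
  "seg_max x s t = Max ((\<lambda>k. \<bar>x k\<bar>) ` {s..t})"

definition strictly_causal :: "nat \<Rightarrow> ((int \<Rightarrow> real) \<Rightarrow> (int \<Rightarrow> real)) \<Rightarrow> bool" where
  "strictly_causal \<mu> \<Delta> \<longleftrightarrow>
     (\<forall>x x' t. (\<forall>k. t - int \<mu> \<le> k \<and> k \<le> t - 1 \<longrightarrow> x k = x' k) \<longrightarrow> \<Delta> x t = \<Delta> x' t)"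

definition linear_op :: "((int \<Rightarrow> real) \<Rightarrow> (int \<Rightarrow> real)) \<Rightarrow> bool" where
  "linear_op \<Delta> \<longleftrightarrow> (\<forall>x x' c c'. \<Delta> (\<lambda>k. c * x k + c' * x' k) = (\<lambda>t. c * \<Delta> x t + c' * \<Delta> x' t))"

end

theory Submission
  imports Defs
begin

text \<open>Write e_s for a(q^-1) y_s - b(q^-1) u_(s-1) and D_s for
  dw + dy |y_(s-mu)^(s-1)| + du |u_(s-mu)^(s-1)|. The hypothesis |e_s| <= D_s gives
  e_s = r_s D_s with |r_s| <= 1, and r serves as the noise w. For each Delta, sample the
  argument at a time k_s of the window [s-mu, s-1] where the given signal z (y, resp. u)
  has maximal modulus: Delta(x)_s = r_s sgn(z_(k_s)) x_(k_s). As z is only a parameter, this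
  is linear in x and strictly causal with memory mu, and Delta(z)_s = r_s |z_(s-mu)^(s-1)|,
  so dw r_s + dy Delta^1(y)_s + du Delta^2(u)_s = r_s D_s = e_s.\<close>

lemma seg_max_attained:
  fixes x :: "int \<Rightarrow> real"
  assumes "s \<le> t"
  shows "\<exists>k. s \<le> k \<and> k \<le> t \<and> \<bar>x k\<bar> = seg_max x s t"
proof -
  have "Max ((\<lambda>k. \<bar>x k\<bar>) ` {s..t}) \<in> (\<lambda>k. \<bar>x k\<bar>) ` {s..t}"
    using assms by (intro Max_in) auto
  then show ?thesis unfolding seg_max_def by force
qed

definition peak_index :: "(int \<Rightarrow> real) \<Rightarrow> nat \<Rightarrow> int \<Rightarrow> int" where
  "peak_index z \<mu> s =
     (SOME k. s - int \<mu> \<le> k \<and> k \<le> s - 1 \<and> \<bar>z k\<bar> = seg_max z (s - int \<mu>) (s - 1))"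

lemma peak_index:
  assumes "\<mu> > 0"
  shows "s - int \<mu> \<le> peak_index z \<mu> s" and "peak_index z \<mu> s \<le> s - 1"
    and "\<bar>z (peak_index z \<mu> s)\<bar> = seg_max z (s - int \<mu>) (s - 1)"
proof -
  have "\<exists>k. s - int \<mu> \<le> k \<and> k \<le> s - 1 \<and> \<bar>z k\<bar> = seg_max z (s - int \<mu>) (s - 1)"
    using assms by (intro seg_max_attained) simp
  from someI_ex[OF this] show "s - int \<mu> \<le> peak_index z \<mu> s" "peak_index z \<mu> s \<le> s - 1"
    "\<bar>z (peak_index z \<mu> s)\<bar> = seg_max z (s - int \<mu>) (s - 1)"
    unfolding peak_index_def by auto
qed

definition peak_op :: "(int \<Rightarrow> real) \<Rightarrow> nat \<Rightarrow> (int \<Rightarrow> real) \<Rightarrow> (int \<Rightarrow> real) \<Rightarrow> int \<Rightarrow> real" where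
  "peak_op r \<mu> z x s = r s * sgn (z (peak_index z \<mu> s)) * x (peak_index z \<mu> s)"

lemma strictly_causal_peak_op: "\<mu> > 0 \<Longrightarrow> strictly_causal \<mu> (peak_op r \<mu> z)"
  unfolding strictly_causal_def peak_op_def using peak_index(1,2) by metis

lemma linear_op_peak_op: "linear_op (peak_op r \<mu> z)"
  unfolding linear_op_def peak_op_def by (auto simp: algebra_simps)

lemma peak_op_self:
  assumes "\<mu> > 0"
  shows "peak_op r \<mu> z z s = r s * seg_max z (s - int \<mu>) (s - 1)"
proof -
  have "sgn (z k) * z k = \<bar>z k\<bar>" for k
    by (metis abs_sgn mult.commute)
  then show ?thesis
    unfolding peak_op_def using peak_index(3)[OF assms] by (metis mult.assoc)
qed

lemma abs_peak_op_self_le: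
  assumes "\<mu> > 0" and "\<bar>r s\<bar> \<le> 1"
  shows "\<bar>peak_op r \<mu> z z s\<bar> \<le> seg_max z (s - int \<mu>) (s - 1)"
proof -
  have "0 \<le> seg_max z (s - int \<mu>) (s - 1)"
    using peak_index(3)[OF assms(1)] by (metis abs_ge_zero)
  then show ?thesis
    unfolding peak_op_self[OF assms(1)] abs_mult using assms(2)
    by (simp add: mult_left_le_one_le)
qed

definition unit_ratio :: "real \<Rightarrow> real \<Rightarrow> real" where
  "unit_ratio e D = (if \<bar>e\<bar> \<le> D \<and> D \<noteq> 0 then e / D else 0)"

lemma abs_unit_ratio_le: "\<bar>unit_ratio e D\<bar> \<le> 1"
proof (cases "\<bar>e\<bar> \<le> D \<and> D \<noteq> 0")
  case True
  then have "D > 0" by linarith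
  with True show ?thesis by (simp add: unit_ratio_def abs_divide)
next
  case False
  then show ?thesis unfolding unit_ratio_def by (simp only: if_False)
qed

lemma unit_ratio_mult: "\<bar>e\<bar> \<le> D \<Longrightarrow> unit_ratio e D * D = e"
  by (cases "D = 0") (simp_all add: unit_ratio_def)

lemma bounded_residual_decomposition:
  fixes e y u :: "int \<Rightarrow> real" and S :: "int set"
  assumes "\<mu> > 0"
    and bound: "\<forall>s\<in>S. \<bar>e s\<bar> \<le> \<delta>w + \<delta>y * seg_max y (s - int \<mu>) (s - 1)
                                     + \<delta>u * seg_max u (s - int \<mu>) (s - 1)"
  shows "\<exists>w \<Delta>1 \<Delta>2. (\<forall>t. \<bar>w t\<bar> \<le> 1) \<and>
       strictly_causal \<mu> \<Delta>1 \<and> linear_op \<Delta>1 \<and>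
       strictly_causal \<mu> \<Delta>2 \<and> linear_op \<Delta>2 \<and>
       (\<forall>t. \<bar>\<Delta>1 y t\<bar> \<le> seg_max y (t - int \<mu>) (t - 1)) \<and>
       (\<forall>t. \<bar>\<Delta>2 u t\<bar> \<le> seg_max u (t - int \<mu>) (t - 1)) \<and>
       (\<forall>s\<in>S. e s = \<delta>w * w s + \<delta>y * \<Delta>1 y s + \<delta>u * \<Delta>2 u s)"
proof -
  define D where "D s = \<delta>w + \<delta>y * seg_max y (s - int \<mu>) (s - 1)
                           + \<delta>u * seg_max u (s - int \<mu>) (s - 1)" for s
  define r where "r s = unit_ratio (e s) (D s)" for s
  have r_le: "\<bar>r s\<bar> \<le> 1" for s
    unfolding r_def by (rule abs_unit_ratio_le)
  have "e s = \<delta>w * r s + \<delta>y * peak_op r \<mu> y y s + \<delta>u * peak_op r \<mu> u u s" if "s \<in> S" for s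
  proof -
    have "e s = r s * D s"
      unfolding r_def using bound that by (simp add: unit_ratio_mult D_def)
    then show ?thesis
      unfolding peak_op_self[OF assms(1)] D_def by (simp add: algebra_simps)
  qed
  then show ?thesis
    using r_le strictly_causal_peak_op[OF assms(1)] linear_op_peak_op
      abs_peak_op_self_le[OF assms(1) r_le]
    by (intro exI[of _ r] exI[of _ "peak_op r \<mu> y"] exI[of _ "peak_op r \<mu> u"]) simp
qed

theorem proposition1:
  fixes n m \<mu> l :: nat
    and P :: "nat \<Rightarrow> nat \<Rightarrow> real" and p :: "nat \<Rightarrow> real"
    and y u :: "int \<Rightarrow> real"
    and \<xi> :: "nat \<Rightarrow> real" and \<delta>w \<delta>y \<delta>u :: real
  assumes "n > 0" and "m > 0" and "\<mu> > 0"
    and bnd: "bounded_vecset (polytope (n + m) l P p)"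
    and roots: "\<forall>\<zeta>\<in>polytope (n + m) l P p. coef_b n \<zeta> 1 \<noteq> 0 \<and>
                  (\<forall>z. b_poly n m \<zeta> z = 0 \<longrightarrow> cmod z > 1)"
    and y0: "\<forall>k. k \<le> - int n \<longrightarrow> y k = 0"
    and u0: "\<forall>k. k < 0 \<longrightarrow> u k = 0"
    and xi: "\<xi> \<in> polytope (n + m) l P p"
    and "\<delta>w \<ge> 0" and "\<delta>y \<ge> 0" and "\<delta>u \<ge> 0"
    and ineq: "\<forall>t\<ge>0. \<bar>apply_a n \<xi> y (t + 1) - apply_b n m \<xi> u t\<bar>
                 \<le> \<delta>w + \<delta>y * seg_max y (t + 1 - int \<mu>) t + \<delta>u * seg_max u (t + 1 - int \<mu>) t"
  shows "\<xi> \<in> polytope (n + m) l P p \<and>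
    (\<exists>w \<Delta>1 \<Delta>2. (\<forall>t. \<bar>w t\<bar> \<le> 1) \<and>
       strictly_causal \<mu> \<Delta>1 \<and> linear_op \<Delta>1 \<and>
       strictly_causal \<mu> \<Delta>2 \<and> linear_op \<Delta>2 \<and>
       (\<forall>t. \<bar>\<Delta>1 y t\<bar> \<le> seg_max y (t - int \<mu>) (t - 1)) \<and>
       (\<forall>t. \<bar>\<Delta>2 u t\<bar> \<le> seg_max u (t - int \<mu>) (t - 1)) \<and>
       (\<forall>t\<ge>0. apply_a n \<xi> y (t + 1) =
            apply_b n m \<xi> u t + \<delta>w * w (t + 1) + \<delta>y * \<Delta>1 y (t + 1) + \<delta>u * \<Delta>2 u (t + 1)))"
proof -
  define e where "e s = apply_a n \<xi> y s - apply_b n m \<xi> u (s - 1)" for s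
  have "\<forall>s\<in>{1..}. \<bar>e s\<bar> \<le> \<delta>w + \<delta>y * seg_max y (s - int \<mu>) (s - 1)
                                 + \<delta>u * seg_max u (s - int \<mu>) (s - 1)"
  proof
    fix s :: int
    assume "s \<in> {1..}"
    then show "\<bar>e s\<bar> \<le> \<delta>w + \<delta>y * seg_max y (s - int \<mu>) (s - 1)
                           + \<delta>u * seg_max u (s - int \<mu>) (s - 1)"
      using ineq[rule_format, of "s - 1"] by (simp add: e_def)
  qed
  from bounded_residual_decomposition[OF \<open>\<mu> > 0\<close> this]
  obtain w \<Delta>1 \<Delta>2 where props: "(\<forall>t. \<bar>w t\<bar> \<le> 1) \<and>
       strictly_causal \<mu> \<Delta>1 \<and> linear_op \<Delta>1 \<and>
       strictly_causal \<mu> \<Delta>2 \<and> linear_op \<Delta>2 \<and>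
       (\<forall>t. \<bar>\<Delta>1 y t\<bar> \<le> seg_max y (t - int \<mu>) (t - 1)) \<and>
       (\<forall>t. \<bar>\<Delta>2 u t\<bar> \<le> seg_max u (t - int \<mu>) (t - 1))"
    and model: "\<forall>s\<in>{1..}. e s = \<delta>w * w s + \<delta>y * \<Delta>1 y s + \<delta>u * \<Delta>2 u s"
    by blast
  have "apply_a n \<xi> y (t + 1) =
          apply_b n m \<xi> u t + \<delta>w * w (t + 1) + \<delta>y * \<Delta>1 y (t + 1) + \<delta>u * \<Delta>2 u (t + 1)"
    if "t \<ge> 0" for t
    using model[rule_format, of "t + 1"] that by (simp add: e_def)
  then show ?thesis
    using xi props by blast
qed

end
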